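(* Let $(N_r)_{r\in\mathbb{Z}}$ be the Narayana sequence. For $1\le a\le 8$ define $(p_a,q_a)$ by $(p_1,q_1)=(1,0)$, $(p_2,q_2)=(1,2)$, $(p_3,q_3)=(4,-3)$, $(p_4,q_4)=(5,-2)$, $(p_5,q_5)=(6,5)$, $(p_6,q_6)=(10,-1)$, $(p_7,q_7)=(15,-7)$, $(p_8,q_8)=(21,6)$. Then for each $1\le a\le 8$ and every integer $m$, $N_{m}=p_{a}N_{m-a}+q_{a}N_{m-2a}+N_{m-3a}$.
   Context: The Narayana sequence $(N_r)_{r\in\mathbb{Z}}$ is defined by $N_0=0$, $N_1=N_2=1$ and $N_r=N_{r-1}+N_{r-3}$ for all integers $r$ (extended to negative indices via $N_{r-3}=N_r-N_{r-1}$). *)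

theory Defs
  imports Main
begin

fun nar_pos :: "nat \<Rightarrow> int" where
  "nar_pos 0 = 0"
| "nar_pos (Suc 0) = 1"
| "nar_pos (Suc (Suc 0)) = 1"
| "nar_pos (Suc (Suc (Suc n))) = nar_pos (Suc (Suc n)) + nar_pos n"

text \<open>Narayana numbers at nonpositive indices: nar_neg k = N(-k), obtained from
  N(r-3) = N r - N(r-1); N 0 = 0, N(-1) = 0, N(-2) = 1.\<close>
fun nar_neg :: "nat \<Rightarrow> int" where
  "nar_neg 0 = 0"
| "nar_neg (Suc 0) = 0"
| "nar_neg (Suc (Suc 0)) = 1"
| "nar_neg (Suc (Suc (Suc k))) = nar_neg k - nar_neg (Suc k)"

definition narayana :: "int \<Rightarrow> int" where
  "narayana r = (if r \<ge> 0 then nar_pos (nat r) else nar_neg (nat (- r)))"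

definition pq :: "int \<Rightarrow> int \<times> int" where
  "pq a = (if a = 1 then (1, 0) else if a = 2 then (1, 2) else if a = 3 then (4, -3)
     else if a = 4 then (5, -2) else if a = 5 then (6, 5) else if a = 6 then (10, -1)
     else if a = 7 then (15, -7) else (21, 6))"

end

theory Submission
  imports Defs
begin

text \<open>The integer-indexed solutions of the Narayana recurrence are closed under sums,
  differences, constant multiples and index shifts, and a solution is determined by its values
  at 0, 1, 2. The right-hand side of the identity is a linear combination of shifts of N, hence
  a solution, so it suffices to check the identity at m = 0, 1, 2, which is a finite
  computation with N at indices down to -24. Conceptually, (p, q) are chosen such that
  the a-th powers of the roots of x^3 - x^2 - 1 are the roots of x^3 - p x^2 - q x - 1.\<close>

definition narayana_rec :: "(int \<Rightarrow> 'a::ab_group_add) \<Rightarrow> bool" where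
  "narayana_rec f \<longleftrightarrow> (\<forall>r. f r = f (r - 1) + f (r - 3))"

lemma narayana_recD: "narayana_rec f \<Longrightarrow> f r = f (r - 1) + f (r - 3)"
  unfolding narayana_rec_def by blast

lemma narayana_rec_shift: "narayana_rec f \<Longrightarrow> narayana_rec (\<lambda>r. f (r - k))"
  unfolding narayana_rec_def by (metis diff_right_commute)

lemma narayana_rec_add:
  assumes "narayana_rec f" "narayana_rec g"
  shows "narayana_rec (\<lambda>r. f r + g r)"
  unfolding narayana_rec_def
proof
  fix r
  show "f r + g r = (f (r - 1) + g (r - 1)) + (f (r - 3) + g (r - 3))"
    using narayana_recD[OF assms(1), of r] narayana_recD[OF assms(2), of r]
    by (simp add: algebra_simps)
qed

lemma narayana_rec_diff:
  assumes "narayana_rec f" "narayana_rec g"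
  shows "narayana_rec (\<lambda>r. f r - g r)"
  unfolding narayana_rec_def
proof
  fix r
  show "f r - g r = (f (r - 1) - g (r - 1)) + (f (r - 3) - g (r - 3))"
    using narayana_recD[OF assms(1), of r] narayana_recD[OF assms(2), of r]
    by (simp add: algebra_simps)
qed

lemma narayana_rec_mult_left:
  fixes f :: "int \<Rightarrow> 'a::ring"
  assumes "narayana_rec f"
  shows "narayana_rec (\<lambda>r. c * f r)"
  unfolding narayana_rec_def
proof
  fix r
  show "c * f r = c * f (r - 1) + c * f (r - 3)"
    using narayana_recD[OF assms, of r] by (simp add: distrib_left)
qed

lemma narayana_rec_zero:
  assumes f: "narayana_rec f" and "f 0 = 0" "f 1 = 0" "f 2 = 0"
  shows "f m = 0"
proof -
  have "f m = 0 \<and> f (m + 1) = 0 \<and> f (m + 2) = 0"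
  proof (induction m rule: int_induct[where k = 0])
    case base
    show ?case using assms by simp
  next
    case (step1 i)
    have "f (i + 3) = f (i + 2) + f i"
      using narayana_recD[OF f, of "i + 3"] by (simp add: add.commute)
    with step1.IH show ?case by (simp add: add.assoc)
  next
    case (step2 i)
    have "f (i + 2) = f (i + 1) + f (i - 1)"
      using narayana_recD[OF f, of "i + 2"] by (simp add: algebra_simps)
    with step2.IH have "f (i - 1) = 0"
      by (metis add.left_neutral)
    with step2.IH show ?case
      by (simp add: algebra_simps)
  qed
  then show ?thesis by simp
qed

lemma narayana_rec_eqI:
  assumes "narayana_rec f" "narayana_rec g" "f 0 = g 0" "f 1 = g 1" "f 2 = g 2"
  shows "f m = g m"
  using narayana_rec_zero[OF narayana_rec_diff[OF assms(1,2)]] assms(3-5) by simp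

lemma narayana_of_nat: "narayana (int n) = nar_pos n"
  by (simp add: narayana_def)

lemma narayana_neg_of_nat: "narayana (- int n) = nar_neg n"
  by (cases "n = 0") (simp_all add: narayana_def)

lemma narayana_rec_narayana: "narayana_rec narayana"
  unfolding narayana_rec_def
proof
  fix r :: int
  consider n where "r = int (Suc (Suc (Suc n)))" | "r = 0" | "r = 1" | "r = 2"
    | n where "r = - int (Suc n)"
  proof (cases "r \<ge> 3")
    case True
    then show ?thesis using that(1)[of "nat (r - 3)"] by simp
  next
    case False
    then show ?thesis using that(2-4) that(5)[of "nat (- r - 1)"] by linarith
  qed
  then show "narayana r = narayana (r - 1) + narayana (r - 3)"
  proof cases
    case (1 n)
    have "int (Suc (Suc (Suc n))) - 1 = int (Suc (Suc n))" "int (Suc (Suc (Suc n))) - 3 = int n"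
      by simp_all
    then show ?thesis
      unfolding 1 by (simp only: narayana_of_nat nar_pos.simps)
  next
    case (5 n)
    have "- int (Suc n) - 1 = - int (Suc (Suc n))"
      "- int (Suc n) - 3 = - int (Suc (Suc (Suc (Suc n))))"
      by simp_all
    then show ?thesis
      unfolding 5 by (simp only: narayana_neg_of_nat nar_neg.simps)
  qed (simp_all add: narayana_def eval_nat_numeral)
qed

theorem theorem1:
  fixes a m :: int
  assumes "1 \<le> a" and "a \<le> 8"
  shows "narayana m = fst (pq a) * narayana (m - a) + snd (pq a) * narayana (m - 2 * a)
           + narayana (m - 3 * a)"
proof -
  have a_cases: "a = 1 \<or> a = 2 \<or> a = 3 \<or> a = 4 \<or> a = 5 \<or> a = 6 \<or> a = 7 \<or> a = 8"
    using assms by auto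
  show ?thesis
  proof (rule narayana_rec_eqI[of narayana])
    show "narayana_rec narayana"
      by (rule narayana_rec_narayana)
    show "narayana_rec (\<lambda>m. fst (pq a) * narayana (m - a) + snd (pq a) * narayana (m - 2 * a)
             + narayana (m - 3 * a))"
      by (intro narayana_rec_add narayana_rec_mult_left;
          rule narayana_rec_shift[OF narayana_rec_narayana])
  qed (use a_cases in \<open>(elim disjE; simp add: narayana_def pq_def eval_nat_numeral)+\<close>)
qed

end
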